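(* Let $A,B,C\in\mathbb{R}^2$ be three vectors of equal (nonzero) length that are not all contained in a closed half-plane bounded by a line through the origin (when their tails are placed at the origin). Then there is an ordering $(v_1,v_2,v_3)$ of $A,B,C$ such that, placed tip-to-tail, the third vector meets the first. Precisely, the segment $[v_1+v_2,\,v_1+v_2+v_3]$ intersects the segment $[0,v_1]$: either the two segments cross, or the three vectors form a closed loop ($v_1+v_2+v_3=0$). *)

theory Defs
  imports "HOL-Analysis.Analysis"
begin

end

theory Submission
  imports Defs
begin

text \<open>The cross product identity \<open>[B,C] A + [C,A] B + [A,B] C = 0\<close> turns the sign pattern of
  the three cross products into a positive linear dependence \<open>p A + q B + r C = 0\<close>; the
  half-plane hypothesis, tested with the normals \<open>\<plusminus>perp X\<close> of the three vectors, forces the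
  cross products to share a sign. Ordering the vectors so that the one with the largest
  coefficient \<open>q\<close> sits in the middle, the point \<open>v\<^sub>1 + v\<^sub>2 + (r/q) v\<^sub>3 = (1 - p/q) v\<^sub>1\<close> lies on
  both segments. Equal lengths are only needed to make all three vectors nonzero.\<close>

definition cross2 :: "real ^ 2 \<Rightarrow> real ^ 2 \<Rightarrow> real" where
  "cross2 X Y = X$1 * Y$2 - X$2 * Y$1"

definition perp :: "real ^ 2 \<Rightarrow> real ^ 2" where
  "perp X = vector [- X$2, X$1]"

lemma perp_eq_0_iff [simp]: "perp X = 0 \<longleftrightarrow> X = 0"
  by (auto simp: perp_def vec_eq_iff forall_2)

lemma inner_perp: "perp X \<bullet> Y = cross2 X Y"
  by (simp add: perp_def cross2_def inner_vec_def sum_2)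

lemma cross2_self [simp]: "cross2 X X = 0"
  by (simp add: cross2_def)

lemma cross2_antisym: "cross2 Y X = - cross2 X Y"
  by (simp add: cross2_def)

lemma cross2_dependence:
  "cross2 B C *\<^sub>R A + cross2 C A *\<^sub>R B + cross2 A B *\<^sub>R C = 0"
  by (simp add: cross2_def vec_eq_iff forall_2 algebra_simps)

lemma cross2_opposite_signs_if_not_in_halfplane:
  fixes X Y Z :: "real ^ 2"
  assumes "X \<noteq> 0"
    and "\<not> (\<exists>u. u \<noteq> 0 \<and> u \<bullet> X \<ge> 0 \<and> u \<bullet> Y \<ge> 0 \<and> u \<bullet> Z \<ge> 0)"
  shows "cross2 X Y * cross2 X Z < 0"
proof -
  have "\<not> (cross2 X Y \<ge> 0 \<and> cross2 X Z \<ge> 0)"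
    using assms(2)[unfolded not_ex, rule_format, of "perp X"] assms(1) by (simp add: inner_perp)
  moreover have "\<not> (cross2 X Y \<le> 0 \<and> cross2 X Z \<le> 0)"
    using assms(2)[unfolded not_ex, rule_format, of "- perp X"] assms(1) by (simp add: inner_perp)
  ultimately show ?thesis
    by (auto simp: mult_less_0_iff)
qed

lemma positive_dependence_if_not_in_halfplane:
  fixes A B C :: "real ^ 2"
  assumes "A \<noteq> 0" "B \<noteq> 0" "C \<noteq> 0"
    and no_halfplane: "\<not> (\<exists>u. u \<noteq> 0 \<and> u \<bullet> A \<ge> 0 \<and> u \<bullet> B \<ge> 0 \<and> u \<bullet> C \<ge> 0)"
  obtains p q r :: real where "p > 0" "q > 0" "r > 0" "p *\<^sub>R A + q *\<^sub>R B + r *\<^sub>R C = 0"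
proof -
  define a b c where "a = cross2 B C" and "b = cross2 C A" and "c = cross2 A B"
  have "c * b > 0"
    using cross2_opposite_signs_if_not_in_halfplane[OF \<open>A \<noteq> 0\<close>, of B C] no_halfplane
    by (simp add: a_def b_def c_def cross2_antisym[of C A])
  moreover have "a * c > 0"
    using cross2_opposite_signs_if_not_in_halfplane[OF \<open>B \<noteq> 0\<close>, of C A] no_halfplane
    by (auto simp: a_def c_def cross2_antisym[of A B] conj_ac)
  ultimately have signs: "(a > 0 \<and> b > 0 \<and> c > 0) \<or> (a < 0 \<and> b < 0 \<and> c < 0)"
    by (auto simp: zero_less_mult_iff)
  have dep: "a *\<^sub>R A + b *\<^sub>R B + c *\<^sub>R C = 0"
    unfolding a_def b_def c_def by (rule cross2_dependence)
  then have "(- a) *\<^sub>R A + (- b) *\<^sub>R B + (- c) *\<^sub>R C = 0"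
    by (simp only: scaleR_minus_left flip: minus_add_distrib) simp
  with dep signs that show ?thesis
    by (metis neg_0_less_iff_less)
qed

lemma closed_segments_meet_if_middle_weight_max:
  fixes v1 v2 v3 :: "real ^ 2"
  assumes "0 \<le> p" "0 \<le> r" "0 < q" "p \<le> q" "r \<le> q"
    and dep: "p *\<^sub>R v1 + q *\<^sub>R v2 + r *\<^sub>R v3 = 0"
  shows "closed_segment (v1 + v2) (v1 + v2 + v3) \<inter> closed_segment 0 v1 \<noteq> {}"
proof -
  define x where "x = v1 + v2 + (r / q) *\<^sub>R v3"
  have qx: "q *\<^sub>R x = (q - p) *\<^sub>R v1"
    using \<open>0 < q\<close> dep by (simp add: x_def algebra_simps)
  have "x = (1 / q) *\<^sub>R (q *\<^sub>R x)"
    using \<open>0 < q\<close> by simp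
  then have "x = ((q - p) / q) *\<^sub>R v1"
    unfolding qx by simp
  then have "x \<in> closed_segment 0 v1"
    using assms unfolding in_segment by (intro conjI exI[of _ "(q - p) / q"]) auto
  moreover have "x \<in> closed_segment (v1 + v2) (v1 + v2 + v3)"
    using assms unfolding in_segment x_def
    by (intro conjI exI[of _ "r / q"]) (simp_all add: algebra_simps)
  ultimately show ?thesis by blast
qed

theorem lemma2p3:
  fixes A B C :: "real ^ 2"
  assumes "A \<noteq> 0" and "norm A = norm B" and "norm B = norm C"
    and "\<not> (\<exists>u :: real ^ 2. u \<noteq> 0 \<and> u \<bullet> A \<ge> 0 \<and> u \<bullet> B \<ge> 0 \<and> u \<bullet> C \<ge> 0)"
  shows "\<exists>v1 v2 v3.
           (v1, v2, v3) \<in> {(A, B, C), (A, C, B), (B, A, C), (B, C, A), (C, A, B), (C, B, A)} \<and>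
           closed_segment (v1 + v2) (v1 + v2 + v3) \<inter> closed_segment 0 v1 \<noteq> {}"
proof -
  have "B \<noteq> 0" "C \<noteq> 0" using assms(1-3) by auto
  then obtain p q r :: real where pos: "p > 0" "q > 0" "r > 0"
    and dep: "p *\<^sub>R A + q *\<^sub>R B + r *\<^sub>R C = 0"
    using positive_dependence_if_not_in_halfplane assms(1,4) by blast
  consider "p \<le> q" "r \<le> q" | "q \<le> p" "r \<le> p" | "p \<le> r" "q \<le> r" by linarith
  then show ?thesis
  proof cases
    case 1
    then have "closed_segment (A + B) (A + B + C) \<inter> closed_segment 0 A \<noteq> {}"
      using pos dep by (intro closed_segments_meet_if_middle_weight_max[of p r q]) auto
    then show ?thesis by blast
  next
    case 2
    then have "closed_segment (B + A) (B + A + C) \<inter> closed_segment 0 B \<noteq> {}"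
      using pos dep by (intro closed_segments_meet_if_middle_weight_max[of q r p]) (auto simp: ac_simps)
    then show ?thesis by blast
  next
    case 3
    then have "closed_segment (A + C) (A + C + B) \<inter> closed_segment 0 A \<noteq> {}"
      using pos dep by (intro closed_segments_meet_if_middle_weight_max[of p q r]) (auto simp: ac_simps)
    then show ?thesis by blast
  qed
qed

end
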